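(* Consider the Adaptive Group Lasso degrees-of-freedom estimate $\widehat{df}_\gamma=\mathrm{trace}[(\mathbf I_n+\gamma\mathbf B)^{-1}(\mathbf A-\gamma\mathbf C)]$ (with $\mathbf A,\mathbf B,\mathbf C$ as defined below) for the estimator $\widehat{\boldsymbol\beta}=\arg\min_{\boldsymbol\beta}\tfrac12\|\mathbf y-\mathbf X\boldsymbol\beta\|_2^2+\gamma\sum_g w_g\|\boldsymbol\beta_g\|_2$, $\gamma\in(\gamma_l,\gamma_{l+1})$. Then: (i) if $n_g=1$ for all groups, $\widehat{df}_\gamma$ reduces to the Adaptive Lasso estimate $|\mathcal A|-\gamma\sum_{j\in\mathcal A}\mathrm{sgn}(\widehat\beta_j)\mathrm{sgn}(\widehat\beta^{\mathsf{LS}}_j)\frac{\partial w_j(z)}{\partial z}\big|_{z=\widehat\beta^{\mathsf{LS}}_j}[(\mathbf X_{\mathcal A}^\top\mathbf X_{\mathcal A})^{-1}]_{\pi(j),\pi(j)}$; (ii) if the weights $w_g$ do not depend on $\mathbf y$, then $\mathbf C=\mathbf 0$ and $\widehat{df}_\gamma$ reduces to the Group Lasso estimate $\mathrm{trace}[(\mathbf I_n+\gamma\mathbf B)^{-1}\mathbf A]$; (iii) if both conditions hold, $\widehat{df}_\gamma=|\mathcal A|$ (the Lasso result).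
   Context: Linear model $\mathbf y=\mathbf X\boldsymbol\beta+\boldsymbol\epsilon$, $\widehat{\boldsymbol\beta}^{\mathsf{LS}}=(\mathbf X^\top\mathbf X)^{-1}\mathbf X^\top\mathbf y$; coefficients partitioned into $G$ groups of cardinalities $n_g$; weights $w_g=w_g(\|\widehat{\boldsymbol\beta}^{\mathsf{LS}}_g\|_2)$ with differentiable $w_g$ (derivative $w_g'$). $\mathcal A=\mathcal A_p=\{j:\widehat\beta_j\ne0\}$, $\mathcal A_G=\{g:\|\widehat{\boldsymbol\beta}_g\|_2\ne0\}$; $\mathbf X_{\mathcal A_G}$ the columns of active groups (with invertible Gram matrix), $\mathbf M=\mathbf X_{\mathcal A_G}(\mathbf X_{\mathcal A_G}^\top\mathbf X_{\mathcal A_G})^{-1}$; $\pi(j)$ the position of $j$ in $\mathcal A$. $\boldsymbol\Pi_{\mathcal A_G}=\mathrm{blockdiag}_{g\in\mathcal A_G}\big(w_g[\mathbf I_{n_g}/\|\widehat{\boldsymbol\beta}_g\|_2-\widehat{\boldsymbol\beta}_g\widehat{\boldsymbol\beta}_g^\top/\|\widehat{\boldsymbol\beta}_g\|_2^3]\big)$, $\boldsymbol\Phi_{\mathcal A_G}=\mathrm{blockdiag}_{g\in\mathcal A_G}\big(\frac{\widehat{\boldsymbol\beta}_g}{\|\widehat{\boldsymbol\beta}_g\|_2}w_g'(\|\widehat{\boldsymbol\beta}^{\mathsf{LS}}_g\|_2)\frac{(\widehat{\boldsymbol\beta}^{\mathsf{LS}}_g)^\top}{\|\widehat{\boldsymbol\beta}^{\mathsf{LS}}_g\|_2}\big)$;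 $\mathbf A=\mathbf M\mathbf X_{\mathcal A_G}^\top$, $\mathbf B=\mathbf M\boldsymbol\Pi_{\mathcal A_G}\mathbf M^\top$, $\mathbf C=\mathbf M\boldsymbol\Phi_{\mathcal A_G}\mathbf M^\top$ (for $\mathbf X^\top\mathbf X=\mathbf I_p$, $\mathbf M=\mathbf X_{\mathcal A_G}$). When $n_g=1$ the group index coincides with the variable index $j$ and $w_j(z)$ is the weight function of variable $j$. Transition points are the values of $\gamma>0$ at which the active set changes. *)

theory Defs
  imports Complex_Main "Jordan_Normal_Form.DL_Submatrix" "Jordan_Normal_Form.Gauss_Jordan_Elimination"
begin

definition mtrace :: "real mat \<Rightarrow> real" where
  "mtrace A = (\<Sum>i<dim_row A. A $$ (i,i))"

(* inverse of a square matrix (meaningful when it is invertible) *)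
definition minv :: "real mat \<Rightarrow> real mat" where
  "minv A = the (mat_inverse A)"

(* X_S : the columns of X indexed by S, in increasing order *)
definition cols :: "real mat \<Rightarrow> nat set \<Rightarrow> real mat" where
  "cols X S = submatrix X {..<dim_row X} S"

(* position pi(j) of j in the (increasingly ordered) set S, counting from 0 *)
definition pos :: "nat set \<Rightarrow> nat \<Rightarrow> nat" where
  "pos S j = card {i\<in>S. i < j}"

definition beta_LS :: "real mat \<Rightarrow> real vec \<Rightarrow> real vec" where
  "beta_LS X y = minv (transpose_mat X * X) *\<^sub>v (transpose_mat X *\<^sub>v y)"

(* the variables (indices < p) of group g; grp j is the group of variable j *)
definition grp_set :: "(nat \<Rightarrow> nat) \<Rightarrow> nat \<Rightarrow> nat \<Rightarrow> nat set" where
  "grp_set grp p g = {j. j < p \<and> grp j = g}"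

definition gnorm :: "(nat \<Rightarrow> nat) \<Rightarrow> real vec \<Rightarrow> nat \<Rightarrow> real" where
  "gnorm grp b g = sqrt (\<Sum>j\<in>grp_set grp (dim_vec b) g. (b $ j)^2)"

definition active_vars :: "real vec \<Rightarrow> nat set" where
  "active_vars b = {j. j < dim_vec b \<and> b $ j \<noteq> 0}"

definition active_groups :: "(nat \<Rightarrow> nat) \<Rightarrow> nat \<Rightarrow> real vec \<Rightarrow> nat set" where
  "active_groups grp G b = {g. g < G \<and> gnorm grp b g \<noteq> 0}"

definition active_group_vars :: "(nat \<Rightarrow> nat) \<Rightarrow> nat \<Rightarrow> real vec \<Rightarrow> nat set" where
  "active_group_vars grp G b = {j. j < dim_vec b \<and> grp j \<in> active_groups grp G b}"

definition agl_weight :: "real mat \<Rightarrow> real vec \<Rightarrow> (nat \<Rightarrow> nat) \<Rightarrow> (nat \<Rightarrow> real \<Rightarrow> real) \<Rightarrow> nat \<Rightarrow> real" where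
  "agl_weight X y grp w g = w g (gnorm grp (beta_LS X y) g)"

definition agl_objective :: "real mat \<Rightarrow> real vec \<Rightarrow> (nat \<Rightarrow> nat) \<Rightarrow> nat \<Rightarrow> (nat \<Rightarrow> real \<Rightarrow> real)
    \<Rightarrow> real \<Rightarrow> real vec \<Rightarrow> real" where
  "agl_objective X y grp G w \<gamma> b =
     (let r = y - X *\<^sub>v b in (1/2) * (r \<bullet> r))
     + \<gamma> * (\<Sum>g<G. agl_weight X y grp w g * gnorm grp b g)"

definition agl_M :: "real mat \<Rightarrow> (nat \<Rightarrow> nat) \<Rightarrow> nat \<Rightarrow> real vec \<Rightarrow> real mat" where
  "agl_M X grp G b = (let XA = cols X (active_group_vars grp G b) in
      XA * minv (transpose_mat XA * XA))"

(* Pi_{A_G}: block diagonal over active groups (blocks ordered consistently with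
   the columns of X_{A_G}); entry (a,c) refers to variables pick S a, pick S c *)
definition agl_Pi :: "real mat \<Rightarrow> real vec \<Rightarrow> (nat \<Rightarrow> nat) \<Rightarrow> nat \<Rightarrow> (nat \<Rightarrow> real \<Rightarrow> real)
    \<Rightarrow> real vec \<Rightarrow> real mat" where
  "agl_Pi X y grp G w b = (let S = active_group_vars grp G b in
     mat (card S) (card S) (\<lambda>(a,c).
       let ja = pick S a; jc = pick S c; g = grp ja; N = gnorm grp b g in
       if grp jc = g then
         agl_weight X y grp w g * ((if a = c then 1 else 0) / N - (b $ ja) * (b $ jc) / N^3)
       else 0))"

definition agl_Phi :: "real mat \<Rightarrow> real vec \<Rightarrow> (nat \<Rightarrow> nat) \<Rightarrow> nat \<Rightarrow> (nat \<Rightarrow> real \<Rightarrow> real)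
    \<Rightarrow> real vec \<Rightarrow> real mat" where
  "agl_Phi X y grp G w' b = (let S = active_group_vars grp G b; bLS = beta_LS X y in
     mat (card S) (card S) (\<lambda>(a,c).
       let ja = pick S a; jc = pick S c; g = grp ja;
           N = gnorm grp b g; NLS = gnorm grp bLS g in
       if grp jc = g then
         ((b $ ja) / N) * w' g NLS * ((bLS $ jc) / NLS)
       else 0))"

definition agl_A :: "real mat \<Rightarrow> (nat \<Rightarrow> nat) \<Rightarrow> nat \<Rightarrow> real vec \<Rightarrow> real mat" where
  "agl_A X grp G b = agl_M X grp G b * transpose_mat (cols X (active_group_vars grp G b))"

definition agl_B :: "real mat \<Rightarrow> real vec \<Rightarrow> (nat \<Rightarrow> nat) \<Rightarrow> nat \<Rightarrow> (nat \<Rightarrow> real \<Rightarrow> real)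
    \<Rightarrow> real vec \<Rightarrow> real mat" where
  "agl_B X y grp G w b = agl_M X grp G b * agl_Pi X y grp G w b * transpose_mat (agl_M X grp G b)"

definition agl_C :: "real mat \<Rightarrow> real vec \<Rightarrow> (nat \<Rightarrow> nat) \<Rightarrow> nat \<Rightarrow> (nat \<Rightarrow> real \<Rightarrow> real)
    \<Rightarrow> real vec \<Rightarrow> real mat" where
  "agl_C X y grp G w' b = agl_M X grp G b * agl_Phi X y grp G w' b * transpose_mat (agl_M X grp G b)"

definition agl_df :: "real mat \<Rightarrow> real vec \<Rightarrow> (nat \<Rightarrow> nat) \<Rightarrow> nat \<Rightarrow> (nat \<Rightarrow> real \<Rightarrow> real)
    \<Rightarrow> (nat \<Rightarrow> real \<Rightarrow> real) \<Rightarrow> real \<Rightarrow> real vec \<Rightarrow> real" where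
  "agl_df X y grp G w w' \<gamma> b =
     mtrace (minv (1\<^sub>m (dim_row X) + \<gamma> \<cdot>\<^sub>m agl_B X y grp G w b)
             * (agl_A X grp G b - \<gamma> \<cdot>\<^sub>m agl_C X y grp G w' b))"

end

theory Submission
  imports Defs
begin

(* Write S for the variables of the active groups, M = X_S (X_S^T X_S)^{-1}, so that A = M X_S^T is
   the hat matrix of X_S and tr A = |S|.  If every group is a singleton, S is the active set, each
   1x1 block of Pi is w_j (1/|b_j| - b_j^2/|b_j|^3) = 0, hence B = 0 and df = |S| - gamma tr C;
   Phi is then diagonal with entries sgn b_j sgn bLS_j w_j'(|bLS_j|), and by cyclicity of the
   trace tr C = tr (M^T M Phi), where M^T M = (X_S^T X_S)^{-1}.  Weights that are constant on
   (0, oo) have zero derivative there, so Phi = 0 and C = 0; with singletons as well, every term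
   of the sum above vanishes. *)

lemma minv_correct:
  assumes "invertible_mat A" and A: "A \<in> carrier_mat k k"
  shows "A * minv A = 1\<^sub>m k" and "minv A * A = 1\<^sub>m k" and "minv A \<in> carrier_mat k k"
proof -
  obtain B where AB: "A * B = 1\<^sub>m (dim_row A)" and BA: "B * A = 1\<^sub>m (dim_row B)"
    using assms(1) unfolding invertible_mat_def inverts_mat_def by blast
  have "B \<in> carrier_mat k k"
    using arg_cong[OF AB, of dim_col] arg_cong[OF BA, of dim_col] A by auto
  then have "A \<in> Units (ring_mat TYPE(real) k ())"
    unfolding Units_def ring_mat_def using A AB BA by auto
  then obtain C where C: "mat_inverse A = Some C"
    using mat_inverse(1)[OF A] by fastforce
  then show "A * minv A = 1\<^sub>m k" and "minv A * A = 1\<^sub>m k" and "minv A \<in> carrier_mat k k"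
    using mat_inverse(2)[OF A C] unfolding minv_def by auto
qed

lemma minv_one_mat: "minv (1\<^sub>m k) = 1\<^sub>m k"
proof -
  have inv: "invertible_mat (1\<^sub>m k :: real mat)"
    unfolding invertible_mat_def inverts_mat_def square_mat.simps
    by (auto intro!: exI[of _ "1\<^sub>m k"])
  have "minv (1\<^sub>m k) = minv (1\<^sub>m k) * 1\<^sub>m k"
    using minv_correct(3)[OF inv one_carrier_mat] by simp
  also have "\<dots> = 1\<^sub>m k"
    using minv_correct(2)[OF inv one_carrier_mat] .
  finally show ?thesis .
qed

lemma mtrace_mult:
  assumes "A \<in> carrier_mat n m" and "B \<in> carrier_mat m n"
  shows "mtrace (A * B) = (\<Sum>i<n. \<Sum>k<m. A $$ (i, k) * B $$ (k, i))"
  unfolding mtrace_def using assms by (auto simp: scalar_prod_def lessThan_atLeast0 intro!: sum.cong)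

lemma mtrace_mult_comm:
  assumes A: "A \<in> carrier_mat n m" and B: "B \<in> carrier_mat m n"
  shows "mtrace (A * B) = mtrace (B * A)"
proof -
  have "mtrace (A * B) = (\<Sum>i<n. \<Sum>k<m. A $$ (i, k) * B $$ (k, i))"
    using mtrace_mult[OF A B] .
  also have "\<dots> = (\<Sum>k<m. \<Sum>i<n. B $$ (k, i) * A $$ (i, k))"
    by (subst sum.swap) (simp add: mult.commute)
  also have "\<dots> = mtrace (B * A)"
    using mtrace_mult[OF B A] by simp
  finally show ?thesis .
qed

lemma mtrace_one_mat: "mtrace (1\<^sub>m k) = real k"
  unfolding mtrace_def by simp

lemma mtrace_minus_smult:
  assumes "A \<in> carrier_mat n n" and "C \<in> carrier_mat n n"
  shows "mtrace (A - c \<cdot>\<^sub>m C) = mtrace A - c * mtrace C"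
  unfolding mtrace_def using assms by (simp add: sum_subtractf sum_distrib_left)

lemma mtrace_mult_diagonal_transpose:
  assumes M: "M \<in> carrier_mat n k" and D: "D \<in> carrier_mat k k"
    and diagonal: "\<And>a c. a < k \<Longrightarrow> c < k \<Longrightarrow> a \<noteq> c \<Longrightarrow> D $$ (a, c) = 0"
  shows "mtrace (M * D * transpose_mat M) = (\<Sum>a<k. D $$ (a, a) * (transpose_mat M * M) $$ (a, a))"
proof -
  let ?Q = "transpose_mat M * M"
  have "mtrace (M * D * transpose_mat M) = mtrace (transpose_mat M * (M * D))"
    using mtrace_mult_comm[of "M * D" n k "transpose_mat M"] M D by auto
  also have "\<dots> = mtrace (?Q * D)"
    using M D by (simp add: assoc_mult_mat[of "transpose_mat M" k n M k D k])
  also have "\<dots> = (\<Sum>a<k. \<Sum>c<k. ?Q $$ (a, c) * D $$ (c, a))"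
    using mtrace_mult[of ?Q k k D] M D by simp
  also have "\<dots> = (\<Sum>a<k. \<Sum>c<k. if c = a then D $$ (a, a) * ?Q $$ (a, a) else 0)"
    using diagonal by (intro sum.cong) auto
  also have "\<dots> = (\<Sum>a<k. D $$ (a, a) * ?Q $$ (a, a))"
    by simp
  finally show ?thesis .
qed

lemma mtrace_hat_mat:
  assumes Z: "Z \<in> carrier_mat n k" and "invertible_mat (transpose_mat Z * Z)"
  shows "mtrace (Z * minv (transpose_mat Z * Z) * transpose_mat Z) = real k"
proof -
  let ?Gi = "minv (transpose_mat Z * Z)"
  have Gi: "?Gi \<in> carrier_mat k k" "?Gi * (transpose_mat Z * Z) = 1\<^sub>m k"
    using minv_correct[OF assms(2)] Z by auto
  have "mtrace (Z * ?Gi * transpose_mat Z) = mtrace (Z * (?Gi * transpose_mat Z))"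
    using Z Gi by (simp add: assoc_mult_mat[of _ n k _ k _ n])
  also have "\<dots> = mtrace (?Gi * transpose_mat Z * Z)"
    using mtrace_mult_comm[OF Z, of "?Gi * transpose_mat Z"] Z Gi by auto
  also have "?Gi * transpose_mat Z * Z = 1\<^sub>m k"
    using Z Gi by (simp add: assoc_mult_mat[of _ k k _ n _ k])
  finally show ?thesis
    by (simp add: mtrace_one_mat)
qed

lemma hat_factor_gram:
  assumes Z: "Z \<in> carrier_mat n k" and "invertible_mat (transpose_mat Z * Z)"
  shows "transpose_mat (Z * minv (transpose_mat Z * Z)) * (Z * minv (transpose_mat Z * Z))
           = transpose_mat (minv (transpose_mat Z * Z))"
proof -
  let ?Gi = "minv (transpose_mat Z * Z)"
  have Gi: "?Gi \<in> carrier_mat k k" "transpose_mat Z * Z * ?Gi = 1\<^sub>m k"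
    using minv_correct[OF assms(2)] Z by auto
  have "transpose_mat (Z * ?Gi) * (Z * ?Gi) = transpose_mat ?Gi * (transpose_mat Z * Z * ?Gi)"
    using Z Gi by (simp add: transpose_mult assoc_mult_mat[of _ k n _ n _ k]
        assoc_mult_mat[of _ k k _ n _ k] assoc_mult_mat[of _ k n _ k _ k])
  then show ?thesis
    using Gi by simp
qed

lemma pos_pick: "a < card S \<Longrightarrow> pos S (pick S a) = a"
  unfolding pos_def by (rule card_pick_le)

lemma pick_pos: "j \<in> S \<Longrightarrow> pick S (pos S j) = j"
  unfolding pos_def by (rule pick_card_in_set)

lemma pos_less_card: "finite S \<Longrightarrow> j \<in> S \<Longrightarrow> pos S j < card S"
  unfolding pos_def by (rule psubset_card_mono) auto

lemma bij_betw_pick: "finite S \<Longrightarrow> bij_betw (pick S) {..<card S} S"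
  by (rule bij_betw_byWitness[where f' = "pos S"])
    (auto simp: pos_pick pick_pos pos_less_card pick_in_set_le)

lemma DERIV_zero_if_const_on_pos:
  fixes f :: "real \<Rightarrow> real"
  assumes "\<forall>x>0. f x = c" and "(f has_real_derivative d) (at z)" and "z > 0"
  shows "d = 0"
  by (rule DERIV_local_const[OF assms(2,3)]) (use assms(1,3) in auto)

lemma grp_set_singleton:
  assumes "\<forall>g<G. card (grp_set grp p g) = 1" and "\<forall>j<p. grp j < G" and "j < p"
  shows "grp_set grp p (grp j) = {j}"
proof -
  obtain i where "grp_set grp p (grp j) = {i}"
    using assms by (metis card_1_singletonE)
  moreover have "j \<in> grp_set grp p (grp j)"
    using \<open>j < p\<close> unfolding grp_set_def by simp
  ultimately show ?thesis
    by simp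
qed

lemma gnorm_singleton:
  assumes "grp_set grp (dim_vec v) (grp j) = {j}"
  shows "gnorm grp v (grp j) = \<bar>v $ j\<bar>"
  using assms unfolding gnorm_def by simp

lemma dim_beta_LS:
  assumes "X \<in> carrier_mat n p" and "invertible_mat (transpose_mat X * X)"
  shows "dim_vec (beta_LS X y) = p"
proof -
  have "transpose_mat X * X \<in> carrier_mat p p"
    using assms(1) by simp
  from minv_correct(3)[OF assms(2) this] show ?thesis
    unfolding beta_LS_def by simp
qed

lemma active_group_varsD:
  assumes "j \<in> active_group_vars grp G b"
  shows "j < dim_vec b" and "grp j < G" and "gnorm grp b (grp j) \<noteq> 0"
  using assms unfolding active_group_vars_def active_groups_def by auto

lemma finite_active_group_vars: "finite (active_group_vars grp G b)"
  unfolding active_group_vars_def by simp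

lemma cols_carrier:
  assumes "X \<in> carrier_mat n p" and "S \<subseteq> {..<p}"
  shows "cols X S \<in> carrier_mat n (card S)"
proof -
  have "{i. i < n \<and> i \<in> {..<n}} = {..<n}" and "{j. j < p \<and> j \<in> S} = S"
    using assms(2) by auto
  then show ?thesis
    using assms(1) unfolding cols_def carrier_mat_def by (simp add: dim_submatrix)
qed

lemma agl_M_carrier:
  assumes X: "X \<in> carrier_mat n p" and b: "dim_vec b = p"
    and inv: "invertible_mat (transpose_mat (cols X (active_group_vars grp G b))
                              * cols X (active_group_vars grp G b))"
  shows "cols X (active_group_vars grp G b) \<in> carrier_mat n (card (active_group_vars grp G b))"
    and "agl_M X grp G b \<in> carrier_mat n (card (active_group_vars grp G b))"
proof -
  show Z: "cols X (active_group_vars grp G b) \<in> carrier_mat n (card (active_group_vars grp G b))"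
    using cols_carrier[OF X] active_group_varsD(1) b by blast
  show "agl_M X grp G b \<in> carrier_mat n (card (active_group_vars grp G b))"
    unfolding agl_M_def Let_def using minv_correct(3)[OF inv] Z by auto
qed

lemma agl_Phi_eq_0_if_const_weights:
  fixes b :: "real vec" and grp :: "nat \<Rightarrow> nat"
  assumes const: "\<forall>g<G. \<exists>c. \<forall>z>0. w g z = c"
    and w_deriv: "\<forall>g<G. \<forall>z>0. (w g has_real_derivative w' g z) (at z)"
  defines "k \<equiv> card (active_group_vars grp G b)"
  shows "agl_Phi X y grp G w' b = 0\<^sub>m k k"
proof (rule eq_matI)
  fix a c
  assume a: "a < dim_row (0\<^sub>m k k :: real mat)" and c: "c < dim_col (0\<^sub>m k k :: real mat)"
  define g where "g = grp (pick (active_group_vars grp G b) a)"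
  define N where "N = gnorm grp (beta_LS X y) g"
  have "g < G"
    using active_group_varsD(2)[OF pick_in_set_le] a unfolding g_def k_def by simp
  then have "w' g N = 0" if "N > 0"
    using DERIV_zero_if_const_on_pos const w_deriv that by metis
  moreover have "N \<ge> 0"
    unfolding N_def gnorm_def by (simp add: sum_nonneg)
  ultimately have "w' g N * (beta_LS X y $ pick (active_group_vars grp G b) c / N) = 0"
    by fastforce
  then show "agl_Phi X y grp G w' b $$ (a, c) = 0\<^sub>m k k $$ (a, c)"
    using a c unfolding agl_Phi_def Let_def k_def by (auto simp: g_def[symmetric] N_def[symmetric])
qed (simp_all add: agl_Phi_def Let_def k_def)

lemma agl_C_eq_0_if_const_weights:
  assumes X: "X \<in> carrier_mat n p" and b: "dim_vec b = p"
    and inv: "invertible_mat (transpose_mat (cols X (active_group_vars grp G b))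
                              * cols X (active_group_vars grp G b))"
    and const: "\<forall>g<G. \<exists>c. \<forall>z>0. w g z = c"
    and w_deriv: "\<forall>g<G. \<forall>z>0. (w g has_real_derivative w' g z) (at z)"
  shows "agl_C X y grp G w' b = 0\<^sub>m n n"
  unfolding agl_C_def agl_Phi_eq_0_if_const_weights[OF const w_deriv]
  using agl_M_carrier(2)[OF X b inv] by simp

lemma agl_df_if_const_weights:
  assumes X: "X \<in> carrier_mat n p" and b: "dim_vec b = p"
    and inv: "invertible_mat (transpose_mat (cols X (active_group_vars grp G b))
                              * cols X (active_group_vars grp G b))"
    and const: "\<forall>g<G. \<exists>c. \<forall>z>0. w g z = c"
    and w_deriv: "\<forall>g<G. \<forall>z>0. (w g has_real_derivative w' g z) (at z)"
  shows "agl_df X y grp G w w' \<gamma> b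
           = mtrace (minv (1\<^sub>m n + \<gamma> \<cdot>\<^sub>m agl_B X y grp G w b) * agl_A X grp G b)"
proof -
  have "agl_A X grp G b \<in> carrier_mat n n"
    unfolding agl_A_def using agl_M_carrier[OF X b inv] by auto
  then have "agl_A X grp G b - \<gamma> \<cdot>\<^sub>m agl_C X y grp G w' b = agl_A X grp G b"
    unfolding agl_C_eq_0_if_const_weights[OF X b inv const w_deriv] by (intro eq_matI) auto
  then show ?thesis
    unfolding agl_df_def using X by simp
qed

lemma active_group_vars_singleton:
  assumes singleton: "\<forall>j<p. grp_set grp p (grp j) = {j}"
    and grp_range: "\<forall>j<p. grp j < G" and b: "dim_vec b = p"
  shows "active_group_vars grp G b = active_vars b"
  using grp_range gnorm_singleton[of grp b] singleton b
  unfolding active_group_vars_def active_groups_def active_vars_def by auto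

lemma agl_Pi_eq_0_singleton:
  fixes b :: "real vec" and grp :: "nat \<Rightarrow> nat" and G :: nat
  assumes singleton: "\<forall>j<p. grp_set grp p (grp j) = {j}" and b: "dim_vec b = p"
  defines "k \<equiv> card (active_group_vars grp G b)"
  shows "agl_Pi X y grp G w b = 0\<^sub>m k k"
proof (rule eq_matI)
  fix a c
  assume a: "a < dim_row (0\<^sub>m k k :: real mat)" and c: "c < dim_col (0\<^sub>m k k :: real mat)"
  let ?S = "active_group_vars grp G b"
  define i j where "i = pick ?S a" and "j = pick ?S c"
  have i: "i \<in> ?S" and "j \<in> ?S"
    unfolding i_def j_def using a c pick_in_set_le by (simp_all add: k_def)
  then have "i < p" and "j < p"
    using active_group_varsD(1) b by auto
  have "(if a = c then 1 else 0) / gnorm grp b (grp i) - b $ i * b $ j / gnorm grp b (grp i) ^ 3 = 0"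
    if "grp j = grp i"
  proof -
    have "j = i"
      using singleton[rule_format, OF \<open>i < p\<close>] \<open>j < p\<close> that unfolding grp_set_def by auto
    then have "a = c"
      using pos_pick[of a ?S] pos_pick[of c ?S] a c unfolding i_def j_def k_def by simp
    have N: "gnorm grp b (grp i) = \<bar>b $ i\<bar>"
      using gnorm_singleton singleton[rule_format, OF \<open>i < p\<close>] b by simp
    then have "b $ i \<noteq> 0"
      using active_group_varsD(3)[OF i] by simp
    then show ?thesis
      using N \<open>a = c\<close> \<open>j = i\<close> by (simp add: power3_eq_cube)
  qed
  then show "agl_Pi X y grp G w b $$ (a, c) = 0\<^sub>m k k $$ (a, c)"
    using a c unfolding agl_Pi_def Let_def k_def by (auto simp: i_def[symmetric] j_def[symmetric])
qed (simp_all add: agl_Pi_def Let_def k_def)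

lemma agl_Phi_singleton:
  assumes singleton: "\<forall>j<p. grp_set grp p (grp j) = {j}"
    and b: "dim_vec b = p" and bLS: "dim_vec (beta_LS X y) = p"
    and a: "a < card (active_group_vars grp G b)" and c: "c < card (active_group_vars grp G b)"
  defines "j \<equiv> pick (active_group_vars grp G b) a"
  shows "agl_Phi X y grp G w' b $$ (a, c) = (if a = c
           then sgn (b $ j) * sgn (beta_LS X y $ j) * w' (grp j) \<bar>beta_LS X y $ j\<bar> else 0)"
proof -
  let ?S = "active_group_vars grp G b"
  have "j < p" and "pick ?S c < p"
    using pick_in_set_le[OF a] pick_in_set_le[OF c] active_group_varsD(1) b unfolding j_def by auto
  have off_diagonal: "grp (pick ?S c) \<noteq> grp j" if "a \<noteq> c"
  proof
    assume "grp (pick ?S c) = grp j"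
    then have "pick ?S c = j"
      using singleton[rule_format, OF \<open>j < p\<close>] \<open>pick ?S c < p\<close> unfolding grp_set_def by auto
    then have "c = a"
      using pos_pick[OF a] pos_pick[OF c] unfolding j_def by simp
    with that show False
      by simp
  qed
  have entry: "agl_Phi X y grp G w' b $$ (a, c) = (if grp (pick ?S c) = grp j
      then b $ j / gnorm grp b (grp j) * w' (grp j) (gnorm grp (beta_LS X y) (grp j))
           * (beta_LS X y $ pick ?S c / gnorm grp (beta_LS X y) (grp j))
      else 0)"
    using a c unfolding agl_Phi_def Let_def j_def by simp
  have gnorm_j: "gnorm grp b (grp j) = \<bar>b $ j\<bar>"
    "gnorm grp (beta_LS X y) (grp j) = \<bar>beta_LS X y $ j\<bar>"
    using gnorm_singleton singleton[rule_format, OF \<open>j < p\<close>] b bLS by simp_all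
  have sgn_j: "b $ j / \<bar>b $ j\<bar> = sgn (b $ j)"
    "beta_LS X y $ j / \<bar>beta_LS X y $ j\<bar> = sgn (beta_LS X y $ j)"
    by (simp_all add: real_sgn_eq)
  show ?thesis
  proof (cases "a = c")
    case True
    then have "pick ?S c = j"
      unfolding j_def by simp
    then show ?thesis
      unfolding entry \<open>pick ?S c = j\<close> gnorm_j sgn_j using True by (simp add: ac_simps)
  qed (use entry off_diagonal in simp)
qed

lemma agl_df_if_Pi_eq_0:
  assumes X: "X \<in> carrier_mat n p" and b: "dim_vec b = p"
    and inv: "invertible_mat (transpose_mat (cols X (active_group_vars grp G b))
                              * cols X (active_group_vars grp G b))"
    and Pi: "agl_Pi X y grp G w b = 0\<^sub>m (card (active_group_vars grp G b)) (card (active_group_vars grp G b))"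
  shows "agl_df X y grp G w w' \<gamma> b
           = real (card (active_group_vars grp G b)) - \<gamma> * mtrace (agl_C X y grp G w' b)"
proof -
  let ?S = "active_group_vars grp G b"
  have Z: "cols X ?S \<in> carrier_mat n (card ?S)" and M: "agl_M X grp G b \<in> carrier_mat n (card ?S)"
    using agl_M_carrier[OF X b inv] by auto
  have A: "agl_A X grp G b = cols X ?S * minv (transpose_mat (cols X ?S) * cols X ?S) * transpose_mat (cols X ?S)"
    unfolding agl_A_def agl_M_def Let_def ..
  have "agl_B X y grp G w b = 0\<^sub>m n n"
    unfolding agl_B_def Pi using M by simp
  then have "1\<^sub>m n + \<gamma> \<cdot>\<^sub>m agl_B X y grp G w b = 1\<^sub>m n"
    by (intro eq_matI) auto
  moreover have "agl_A X grp G b \<in> carrier_mat n n" and C: "agl_C X y grp G w' b \<in> carrier_mat n n"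
    unfolding agl_A_def agl_C_def agl_Phi_def using Z M by (auto simp: Let_def)
  ultimately show ?thesis
    unfolding agl_df_def using X mtrace_minus_smult[OF _ C] mtrace_hat_mat[OF Z inv]
    by (simp add: minv_one_mat left_mult_one_mat A)
qed

lemma mtrace_agl_C_diagonal:
  fixes b y :: "real vec" and grp :: "nat \<Rightarrow> nat" and G :: nat and w' :: "nat \<Rightarrow> real \<Rightarrow> real"
  assumes X: "X \<in> carrier_mat n p" and b: "dim_vec b = p"
    and inv: "invertible_mat (transpose_mat (cols X (active_group_vars grp G b))
                              * cols X (active_group_vars grp G b))"
  defines "k \<equiv> card (active_group_vars grp G b)"
    and "Gi \<equiv> minv (transpose_mat (cols X (active_group_vars grp G b)) * cols X (active_group_vars grp G b))"
    and "Phi \<equiv> agl_Phi X y grp G w' b"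
  assumes diagonal: "\<And>a c. a < k \<Longrightarrow> c < k \<Longrightarrow> a \<noteq> c \<Longrightarrow> Phi $$ (a, c) = 0"
  shows "mtrace (agl_C X y grp G w' b) = (\<Sum>a<k. Phi $$ (a, a) * Gi $$ (a, a))"
proof -
  let ?Z = "cols X (active_group_vars grp G b)"
  have Z: "?Z \<in> carrier_mat n k" and M: "agl_M X grp G b \<in> carrier_mat n k"
    using agl_M_carrier[OF X b inv] unfolding k_def by auto
  have "Gi \<in> carrier_mat k k"
    using minv_correct(3)[OF inv] Z unfolding Gi_def by auto
  moreover have "Phi \<in> carrier_mat k k"
    unfolding Phi_def agl_Phi_def Let_def k_def by simp
  moreover have "agl_M X grp G b = ?Z * Gi"
    unfolding agl_M_def Gi_def Let_def ..
  ultimately show ?thesis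
    using mtrace_mult_diagonal_transpose[OF M _ diagonal] hat_factor_gram[OF Z inv]
    unfolding agl_C_def Phi_def[symmetric] Gi_def[symmetric] by simp
qed

lemma agl_df_singleton:
  fixes b :: "real vec" and grp :: "nat \<Rightarrow> nat" and G :: nat
  assumes X: "X \<in> carrier_mat n p" and b: "dim_vec b = p" and bLS: "dim_vec (beta_LS X y) = p"
    and inv: "invertible_mat (transpose_mat (cols X (active_group_vars grp G b))
                              * cols X (active_group_vars grp G b))"
    and singleton: "\<forall>j<p. grp_set grp p (grp j) = {j}"
  defines "S \<equiv> active_group_vars grp G b"
  shows "agl_df X y grp G w w' \<gamma> b = real (card S) - \<gamma> * (\<Sum>j\<in>S.
           sgn (b $ j) * sgn (beta_LS X y $ j) * w' (grp j) \<bar>beta_LS X y $ j\<bar>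
           * minv (transpose_mat (cols X S) * cols X S) $$ (pos S j, pos S j))"
proof -
  define Gi where "Gi = minv (transpose_mat (cols X S) * cols X S)"
  define f where "f j = sgn (b $ j) * sgn (beta_LS X y $ j) * w' (grp j) \<bar>beta_LS X y $ j\<bar>
                        * Gi $$ (pos S j, pos S j)" for j
  have Phi_diagonal: "agl_Phi X y grp G w' b $$ (a, c) = 0" if "a < card S" "c < card S" "a \<noteq> c" for a c
    using agl_Phi_singleton[OF singleton b bLS] that unfolding S_def by simp
  have Phi_Gi: "agl_Phi X y grp G w' b $$ (a, a) * Gi $$ (a, a) = f (pick S a)" if "a < card S" for a
    using agl_Phi_singleton[OF singleton b bLS] pos_pick that unfolding f_def S_def by simp
  have "agl_df X y grp G w w' \<gamma> b = real (card S) - \<gamma> * mtrace (agl_C X y grp G w' b)"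
    using agl_df_if_Pi_eq_0[OF X b inv agl_Pi_eq_0_singleton[OF singleton b]] unfolding S_def .
  also have "mtrace (agl_C X y grp G w' b) = (\<Sum>a<card S. agl_Phi X y grp G w' b $$ (a, a) * Gi $$ (a, a))"
    using mtrace_agl_C_diagonal[OF X b inv] Phi_diagonal unfolding S_def Gi_def by blast
  also have "\<dots> = (\<Sum>a<card S. f (pick S a))"
    using Phi_Gi by simp
  also have "\<dots> = (\<Sum>j\<in>S. f j)"
    unfolding S_def by (rule sum.reindex_bij_betw[OF bij_betw_pick[OF finite_active_group_vars]])
  finally show ?thesis
    unfolding f_def Gi_def .
qed

lemma agl_df_singleton_groups:
  assumes X: "X \<in> carrier_mat n p" and b: "dim_vec b = p" and bLS: "dim_vec (beta_LS X y) = p"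
    and inv: "invertible_mat (transpose_mat (cols X (active_group_vars grp G b))
                              * cols X (active_group_vars grp G b))"
    and singleton: "\<forall>g<G. card (grp_set grp p g) = 1" and grp_range: "\<forall>j<p. grp j < G"
  shows "agl_df X y grp G w w' \<gamma> b = real (card (active_vars b))
      - \<gamma> * (\<Sum>j\<in>active_vars b. sgn (b $ j) * sgn (beta_LS X y $ j) * w' (grp j) \<bar>beta_LS X y $ j\<bar>
             * minv (transpose_mat (cols X (active_vars b)) * cols X (active_vars b))
               $$ (pos (active_vars b) j, pos (active_vars b) j))"
proof -
  have singleton': "\<forall>j<p. grp_set grp p (grp j) = {j}"
    using grp_set_singleton[OF singleton grp_range] by blast
  show ?thesis
    using agl_df_singleton[OF X b bLS inv singleton']
    unfolding active_group_vars_singleton[OF singleton' grp_range b] .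
qed

theorem corollaryS7:
  fixes X :: "real mat" and y :: "real vec" and n p G :: nat and grp :: "nat \<Rightarrow> nat"
    and w w' :: "nat \<Rightarrow> real \<Rightarrow> real" and betahat :: "real \<Rightarrow> real vec"
    and \<gamma> \<gamma>l \<gamma>u :: real
  assumes X: "X \<in> carrier_mat n p" and y: "y \<in> carrier_vec n"
    and XtX: "invertible_mat (transpose_mat X * X)"
    and grp_range: "\<forall>j<p. grp j < G"
    and grp_nonempty: "\<forall>g<G. \<exists>j<p. grp j = g"
    and w_deriv: "\<forall>g<G. \<forall>z>0. (w g has_real_derivative w' g z) (at z)"
    and estimator: "\<forall>\<gamma>'>0. betahat \<gamma>' \<in> carrier_vec p \<and>
        (\<forall>b\<in>carrier_vec p. agl_objective X y grp G w \<gamma>' (betahat \<gamma>')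
                             \<le> agl_objective X y grp G w \<gamma>' b)"
    and interval: "0 < \<gamma>l" "\<gamma>l < \<gamma>" "\<gamma> < \<gamma>u"
    and no_transition: "\<forall>\<gamma>'\<in>{\<gamma>l<..<\<gamma>u}.
        active_groups grp G (betahat \<gamma>') = active_groups grp G (betahat \<gamma>)"
    and gram_inv: "invertible_mat
        (transpose_mat (cols X (active_group_vars grp G (betahat \<gamma>)))
         * cols X (active_group_vars grp G (betahat \<gamma>)))"
  shows
    "((\<forall>g<G. card (grp_set grp p g) = 1) \<longrightarrow>
        agl_df X y grp G w w' \<gamma> (betahat \<gamma>) =
          real (card (active_vars (betahat \<gamma>)))
          - \<gamma> * (\<Sum>j\<in>active_vars (betahat \<gamma>).
                sgn (betahat \<gamma> $ j) * sgn (beta_LS X y $ j)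
                * w' (grp j) \<bar>beta_LS X y $ j\<bar>
                * minv (transpose_mat (cols X (active_vars (betahat \<gamma>)))
                        * cols X (active_vars (betahat \<gamma>)))
                  $$ (pos (active_vars (betahat \<gamma>)) j, pos (active_vars (betahat \<gamma>)) j)))
     \<and> ((\<forall>g<G. \<exists>c. \<forall>z>0. w g z = c) \<longrightarrow>
        agl_C X y grp G w' (betahat \<gamma>) = 0\<^sub>m n n \<and>
        agl_df X y grp G w w' \<gamma> (betahat \<gamma>) =
          mtrace (minv (1\<^sub>m n + \<gamma> \<cdot>\<^sub>m agl_B X y grp G w (betahat \<gamma>))
                  * agl_A X grp G (betahat \<gamma>)))
     \<and> ((\<forall>g<G. card (grp_set grp p g) = 1) \<and> (\<forall>g<G. \<exists>c. \<forall>z>0. w g z = c) \<longrightarrow>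
        agl_df X y grp G w w' \<gamma> (betahat \<gamma>) = real (card (active_vars (betahat \<gamma>))))"
proof -
  \<comment> \<open>The identities are algebraic at the fixed \<gamma>: of the estimator hypotheses only
      \<gamma> > 0 and the dimension of the minimiser are used.\<close>
  define b where "b = betahat \<gamma>"
  have b: "dim_vec b = p"
    using estimator interval unfolding b_def by auto
  note singleton_groups = agl_df_singleton_groups[OF X b dim_beta_LS[OF X XtX] gram_inv[folded b_def]
      _ grp_range]
  have "agl_df X y grp G w w' \<gamma> b = real (card (active_vars b))"
    if singleton: "\<forall>g<G. card (grp_set grp p g) = 1" and const: "\<forall>g<G. \<exists>c. \<forall>z>0. w g z = c"
  proof -
    have "w' (grp j) \<bar>beta_LS X y $ j\<bar> = 0" if "j \<in> active_vars b" and "beta_LS X y $ j \<noteq> 0" for j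
    proof -
      have "grp j < G"
        using grp_range b that(1) unfolding active_vars_def by auto
      with const obtain c where "\<forall>z>0. w (grp j) z = c"
        by blast
      then show ?thesis
        by (rule DERIV_zero_if_const_on_pos[where z = "\<bar>beta_LS X y $ j\<bar>"]) (use w_deriv \<open>grp j < G\<close> that(2) in auto)
    qed
    then show ?thesis
      using singleton_groups[OF singleton] by (auto intro!: sum.neutral simp: sgn_eq_0_iff)
  qed
  then show ?thesis
    using singleton_groups agl_C_eq_0_if_const_weights[OF X b gram_inv[folded b_def] _ w_deriv]
      agl_df_if_const_weights[OF X b gram_inv[folded b_def] _ w_deriv]
    unfolding b_def by blast
qed

end
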